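(* Let $n\ge 2$, let $\lambda_1\ge\lambda_2\ge\dots\ge\lambda_n$ be real numbers, and let $w_1,\dots,w_n$ be non-negative real numbers with $\sum_{i=1}^n w_i=1$. Let $\mu_1\ge\dots\ge\mu_{n-1}$ be the roots (which are all real) of the degree-$(n-1)$ polynomial $$p(x)=\sum_{i=1}^n w_i\prod_{j\ne i}(x-\lambda_j).$$ Set $U_\ell:=\sum_{i=\ell}^n w_i$ and $L_{r+1}:=\sum_{i=1}^{r+1}w_i$. Then for all integers $1\le \ell\le r\le n-1$ such that $U_\ell\neq 0$ and $L_{r+1}\neq 0$, $$\sum_{j=\ell}^r\lambda_{j+1}+\sum_{j=\ell}^r\frac{w_{j+1}}{L_{r+1}}(\lambda_\ell-\lambda_{j+1})\;\le\;\sum_{j=\ell}^r\mu_j\;\le\;\sum_{j=\ell}^r\lambda_j-\sum_{j=\ell}^r\frac{w_j}{U_\ell}(\lambda_j-\lambda_{r+1}).$$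
   Context: Roots are counted with multiplicity and listed in non-increasing order. *)

theory Defs
  imports "HOL-Computational_Algebra.Polynomial"
begin

definition interlace_poly :: "nat \<Rightarrow> (nat \<Rightarrow> real) \<Rightarrow> (nat \<Rightarrow> real) \<Rightarrow> real poly" where
  "interlace_poly n lam w =
     (\<Sum>i=1..n. smult (w i) (\<Prod>j\<in>{1..n} - {i}. [:- lam j, 1:]))"

end

theory Submission
  imports Defs
begin

(* For strictly decreasing nodes and positive weights, p changes sign between consecutive nodes,
   so it has exactly one root in each gap (lambda_(j+1), lambda_j).  Let nu be the roots of the
   polynomial built from the tail nodes lambda_l, ..., lambda_n.  At nu_j the value of p is a sum
   over the head nodes whose sign is known, and this places mu_j below nu_j.  The sum of
   nu_l, ..., nu_r is controlled by the interpolation identity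
     sum_K lambda - sum_K nu = sum_(j in K) prod_(i in K) (lambda_j - nu_i) / prod_(i in K - {j}) (lambda_j - lambda_i),
   in which, by interlacing, the j-th term is at least w_j / U_l * (lambda_j - lambda_(r+1)).
   Arbitrary data are limits of such generic data; their sorted roots are bounded, so a
   subsequence converges, necessarily to mu.  The lower bound is the upper bound for the
   reflected data -lambda_(n+1-i), w_(n+1-i), whose roots are -mu_(n-j). *)

lemma prod_linear_degree_coeffs:
  fixes x :: "'a \<Rightarrow> 'b::idom"
  assumes "finite K"
  shows "degree (\<Prod>j\<in>K. [:- x j, 1:]) = card K \<and> coeff (\<Prod>j\<in>K. [:- x j, 1:]) (card K) = 1
     \<and> (K \<noteq> {} \<longrightarrow> coeff (\<Prod>j\<in>K. [:- x j, 1:]) (card K - 1) = - (\<Sum>j\<in>K. x j))"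
  using assms
proof (induction K rule: finite_induct)
  case empty
  then show ?case by simp
next
  case (insert i K)
  let ?Q = "\<Prod>j\<in>K. [:- x j, 1:]"
  have prod: "(\<Prod>j\<in>insert i K. [:- x j, 1:]) = [:- x i, 1:] * ?Q" and card: "card (insert i K) = Suc (card K)"
    using insert by simp_all
  have "?Q \<noteq> 0" using insert.IH by auto
  then have "degree ([:- x i, 1:] * ?Q) = Suc (card K)"
    using insert.IH by (subst degree_mult_eq) auto
  moreover have "coeff ([:- x i, 1:] * ?Q) (Suc (card K)) = 1"
    using insert.IH by (simp add: coeff_eq_0)
  moreover have "coeff ([:- x i, 1:] * ?Q) (card K) = - (\<Sum>j\<in>insert i K. x j)"
  proof (cases "K = {}")
    case False
    then obtain k where "card K = Suc k" using insert.hyps(1) by (cases "card K") auto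
    then show ?thesis using insert False by simp
  qed simp
  ultimately show ?case unfolding prod card by simp
qed

lemma poly_eq_smult_prod_linear:
  fixes x :: "'a \<Rightarrow> 'b::idom"
  assumes "finite K" "inj_on x K" "\<And>j. j \<in> K \<Longrightarrow> poly p (x j) = 0" "degree p \<le> card K"
  shows "p = smult (coeff p (card K)) (\<Prod>j\<in>K. [:- x j, 1:])"
proof (rule poly_eqI_degree_lead_coeff[where A = "x ` K" and n = "card K"])
  have "degree (\<Prod>j\<in>K. [:- x j, 1:]) = card K" "coeff (\<Prod>j\<in>K. [:- x j, 1:]) (card K) = 1"
    using prod_linear_degree_coeffs[OF assms(1), of x] by auto
  then show "coeff p (card K) = coeff (smult (coeff p (card K)) (\<Prod>j\<in>K. [:- x j, 1:])) (card K)"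
    and "degree (smult (coeff p (card K)) (\<Prod>j\<in>K. [:- x j, 1:])) \<le> card K"
    by (simp_all add: degree_smult_le order.trans[OF degree_smult_le])
qed (use assms in \<open>auto simp: card_image poly_prod\<close>)

lemma sorted_roots_unique:
  fixes x y :: "nat \<Rightarrow> 'a::linordered_idom"
  assumes "(\<Prod>j\<in>{p..<q}. [:- x j, 1:]) = (\<Prod>j\<in>{p..<q}. [:- y j, 1:])"
    and "antimono_on {p..<q} x" and "antimono_on {p..<q} y"
    and "j \<in> {p..<q}"
  shows "x j = y j"
  using assms
proof (induction "q - p" arbitrary: p)
  case 0
  then show ?case by simp
next
  case (Suc k)
  have roots: "poly (\<Prod>j\<in>{p..<q}. [:- z j, 1:]) t = 0 \<longleftrightarrow> (\<exists>i\<in>{p..<q}. z i = t)"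
    for z :: "nat \<Rightarrow> 'a" and t
    unfolding poly_prod by (subst prod_zero_iff) auto
  have "p < q" using Suc.prems by simp
  then have "poly (\<Prod>j\<in>{p..<q}. [:- x j, 1:]) (x p) = 0" "poly (\<Prod>j\<in>{p..<q}. [:- y j, 1:]) (y p) = 0"
    using roots by auto
  then obtain i i' where "i \<in> {p..<q}" "y i = x p" "i' \<in> {p..<q}" "x i' = y p"
    using roots[of y "x p"] roots[of x "y p"] Suc.prems(1) by auto
  then have xyp: "x p = y p"
    using monotone_onD[OF Suc.prems(2), of p i'] monotone_onD[OF Suc.prems(3), of p i] \<open>p < q\<close> by auto
  have split: "(\<Prod>j\<in>{p..<q}. [:- z j, 1:]) = [:- z p, 1:] * (\<Prod>j\<in>{Suc p..<q}. [:- z j, 1:])"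
    for z :: "nat \<Rightarrow> 'a"
    using \<open>p < q\<close> by (simp add: prod.atLeast_Suc_lessThan)
  have "(\<Prod>j\<in>{Suc p..<q}. [:- x j, 1:]) = (\<Prod>j\<in>{Suc p..<q}. [:- y j, 1:])"
    using Suc.prems(1) unfolding split xyp by (subst (asm) mult_left_cancel) auto
  moreover have "antimono_on {Suc p..<q} x" "antimono_on {Suc p..<q} y"
    using Suc.prems(2,3) by (auto intro: monotone_on_subset)
  ultimately show ?case
    using Suc.hyps(1)[of "Suc p"] Suc.hyps(2) Suc.prems(4) xyp by (cases "j = p") auto
qed

lemma sign_prod_diff:
  fixes f :: "'a \<Rightarrow> 'b::linordered_idom"
  assumes "finite S" "\<And>m. m \<in> S \<Longrightarrow> f m \<noteq> x"
  shows "0 < (-1) ^ card {m\<in>S. x < f m} * (\<Prod>m\<in>S. x - f m)"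
  using assms
proof (induction S rule: finite_induct)
  case empty
  then show ?case by simp
next
  case (insert i S)
  then have IH: "0 < (-1) ^ card {m\<in>S. x < f m} * (\<Prod>m\<in>S. x - f m)" by auto
  show ?case
  proof (cases "x < f i")
    case True
    then have "{m\<in>insert i S. x < f m} = insert i {m\<in>S. x < f m}" by auto
    then have "card {m\<in>insert i S. x < f m} = Suc (card {m\<in>S. x < f m})"
      using insert.hyps by simp
    moreover have "(x - f i) * ((-1) ^ card {m\<in>S. x < f m} * (\<Prod>m\<in>S. x - f m)) < 0"
      using IH True by (intro mult_neg_pos) auto
    ultimately show ?thesis using insert.hyps by (simp add: mult.left_commute)
  next
    case False
    then have "{m\<in>insert i S. x < f m} = {m\<in>S. x < f m}" by auto
    moreover have "0 < (x - f i) * ((-1) ^ card {m\<in>S. x < f m} * (\<Prod>m\<in>S. x - f m))"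
      using False insert.prems[of i] by (intro mult_pos_pos[OF _ IH]) auto
    ultimately show ?thesis using insert.hyps by (simp add: mult.left_commute)
  qed
qed

lemma coeff_pred_card_eq_lagrange_sum:
  fixes x :: "'a \<Rightarrow> 'b::field"
  assumes K: "finite K" "K \<noteq> {}" and inj: "inj_on x K" and deg: "degree D < card K"
  shows "coeff D (card K - 1) = (\<Sum>j\<in>K. poly D (x j) / (\<Prod>i\<in>K - {j}. x j - x i))"
proof -
  define c where "c j = poly D (x j) / (\<Prod>i\<in>K - {j}. x j - x i)" for j
  define L where "L = (\<Sum>j\<in>K. smult (c j) (\<Prod>i\<in>K - {j}. [:- x i, 1:]))"
  have basis: "degree (\<Prod>i\<in>K - {j}. [:- x i, 1:]) = card K - 1"
    "coeff (\<Prod>i\<in>K - {j}. [:- x i, 1:]) (card K - 1) = 1" if "j \<in> K" for j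
    using prod_linear_degree_coeffs[of "K - {j}" x] K that by auto
  have "poly L (x m) = poly D (x m)" if m: "m \<in> K" for m
  proof -
    have "c j * (\<Prod>i\<in>K - {j}. x m - x i) = (if j = m then poly D (x m) else 0)" if "j \<in> K" for j
      using that m K inj by (auto simp: c_def inj_on_def prod_zero_iff)
    then show ?thesis
      unfolding L_def by (simp add: poly_sum poly_prod m K(1) cong: sum.cong)
  qed
  moreover have "degree L < card K"
  proof -
    have "degree L \<le> card K - 1"
      unfolding L_def by (intro degree_sum_le) (use basis K in \<open>auto intro: order.trans[OF degree_smult_le]\<close>)
    moreover have "card K > 0" using K by auto
    ultimately show ?thesis by linarith
  qed
  ultimately have "D = L"
    using deg inj by (intro poly_eqI_degree[where A = "x ` K"]) (auto simp: card_image)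
  moreover have "coeff L (card K - 1) = (\<Sum>j\<in>K. c j)"
    unfolding L_def coeff_sum coeff_smult by (intro sum.cong) (auto simp: basis[simplified])
  ultimately show ?thesis unfolding c_def by simp
qed

lemma sum_diff_eq_lagrange_sum:
  fixes x y :: "'a \<Rightarrow> 'b::field"
  assumes K: "finite K" "K \<noteq> {}" and inj: "inj_on x K"
  shows "(\<Sum>j\<in>K. x j) - (\<Sum>j\<in>K. y j) = (\<Sum>j\<in>K. (\<Prod>i\<in>K. x j - y i) / (\<Prod>i\<in>K - {j}. x j - x i))"
proof -
  let ?X = "\<Prod>j\<in>K. [:- x j, 1:]" and ?Y = "\<Prod>j\<in>K. [:- y j, 1:]"
  have X: "degree ?X = card K" "coeff ?X (card K) = 1" "coeff ?X (card K - 1) = - (\<Sum>j\<in>K. x j)"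
    and Y: "degree ?Y = card K" "coeff ?Y (card K) = 1" "coeff ?Y (card K - 1) = - (\<Sum>j\<in>K. y j)"
    using prod_linear_degree_coeffs[OF K(1), of x] prod_linear_degree_coeffs[OF K(1), of y] K(2) by auto
  have "degree (?Y - ?X) < card K"
    using K X Y by (intro degree_lessI) (auto simp: card_gt_0_iff coeff_eq_0 le_less)
  from coeff_pred_card_eq_lagrange_sum[OF K inj this]
  have "(\<Sum>j\<in>K. x j) - (\<Sum>j\<in>K. y j)
      = (\<Sum>j\<in>K. poly (?Y - ?X) (x j) / (\<Prod>i\<in>K - {j}. x j - x i))"
    using X Y by simp
  moreover have "poly (?Y - ?X) (x j) = (\<Prod>i\<in>K. x j - y i)" if "j \<in> K" for j
    using that K(1) by (auto simp: poly_prod prod_zero_iff)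
  ultimately show ?thesis by (simp cong: sum.cong)
qed

definition interlace_poly_on :: "'a set \<Rightarrow> ('a \<Rightarrow> real) \<Rightarrow> ('a \<Rightarrow> real) \<Rightarrow> real poly" where
  "interlace_poly_on S lam w = (\<Sum>i\<in>S. smult (w i) (\<Prod>j\<in>S - {i}. [:- lam j, 1:]))"

lemma interlace_poly_eq_interlace_poly_on: "interlace_poly n lam w = interlace_poly_on {1..n} lam w"
  by (simp add: interlace_poly_def interlace_poly_on_def)

lemma poly_interlace_poly_on:
  "poly (interlace_poly_on S lam w) x = (\<Sum>i\<in>S. w i * (\<Prod>j\<in>S - {i}. x - lam j))"
  by (simp add: interlace_poly_on_def poly_sum poly_prod)

lemma poly_interlace_poly_on_node:
  assumes "finite S" "i \<in> S"
  shows "poly (interlace_poly_on S lam w) (lam i) = w i * (\<Prod>j\<in>S - {i}. lam i - lam j)"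
proof -
  have vanish: "(\<Prod>j\<in>S - {k}. lam i - lam j) = 0" if "k \<in> S" "k \<noteq> i" for k
    using assms that by (intro prod_zero) auto
  have "(\<Sum>k\<in>S - {i}. w k * (\<Prod>j\<in>S - {k}. lam i - lam j)) = 0"
    by (intro sum.neutral) (simp add: vanish)
  then show ?thesis
    unfolding poly_interlace_poly_on using assms by (simp add: sum.remove[of S i])
qed

lemma degree_coeff_interlace_poly_on:
  assumes "finite S"
  shows "degree (interlace_poly_on S lam w) \<le> card S - 1"
    and "coeff (interlace_poly_on S lam w) (card S - 1) = (\<Sum>i\<in>S. w i)"
proof -
  have basis: "degree (\<Prod>j\<in>S - {i}. [:- lam j, 1:]) = card S - 1"
    "coeff (\<Prod>j\<in>S - {i}. [:- lam j, 1:]) (card S - 1) = 1" if "i \<in> S" for i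
    using prod_linear_degree_coeffs[of "S - {i}" lam] assms that by auto
  show "degree (interlace_poly_on S lam w) \<le> card S - 1"
    unfolding interlace_poly_on_def
    by (intro degree_sum_le) (use basis assms in \<open>auto intro: order.trans[OF degree_smult_le]\<close>)
  show "coeff (interlace_poly_on S lam w) (card S - 1) = (\<Sum>i\<in>S. w i)"
    unfolding interlace_poly_on_def coeff_sum coeff_smult by (intro sum.cong) (auto simp: basis[simplified])
qed

lemma poly_interlace_poly_on_union:
  assumes "finite S" "finite T" "S \<inter> T = {}"
  shows "poly (interlace_poly_on (S \<union> T) lam w) x
           = poly (interlace_poly_on S lam w) x * (\<Prod>m\<in>T. x - lam m)
             + (\<Sum>i\<in>T. w i * (\<Prod>m\<in>(S \<union> T) - {i}. x - lam m))"
proof -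
  have "(\<Prod>m\<in>(S \<union> T) - {i}. x - lam m) = (\<Prod>m\<in>S - {i}. x - lam m) * (\<Prod>m\<in>T. x - lam m)"
    if "i \<in> S" for i
  proof -
    have "(S \<union> T) - {i} = (S - {i}) \<union> T" "(S - {i}) \<inter> T = {}" using that assms(3) by auto
    then show ?thesis using assms(1,2) by (simp add: prod.union_disjoint)
  qed
  then show ?thesis
    unfolding poly_interlace_poly_on using assms
    by (simp add: sum.union_disjoint sum_distrib_right mult.assoc cong: sum.cong)
qed

definition strictly_interlaces :: "nat \<Rightarrow> nat \<Rightarrow> (nat \<Rightarrow> real) \<Rightarrow> (nat \<Rightarrow> real) \<Rightarrow> bool" where
  "strictly_interlaces a b lam nu \<longleftrightarrow> (\<forall>j\<in>{a..<b}. lam (Suc j) < nu j \<and> nu j < lam j)"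

lemma strict_antimono_on_leD:
  fixes f :: "'a::linorder \<Rightarrow> 'b::order"
  assumes "strict_antimono_on A f" "i \<in> A" "j \<in> A" "i \<le> j"
  shows "f j \<le> f i"
  using assms by (cases "i = j") (auto dest: monotone_onD)

lemma strictly_interlaces_imp_strict_antimono:
  fixes lam :: "nat \<Rightarrow> real"
  assumes lam: "strict_antimono_on {a..b} lam" and nu: "strictly_interlaces a b lam nu"
  shows "strict_antimono_on {a..<b} nu"
proof (rule monotone_onI)
  fix i j assume ij: "i \<in> {a..<b}" "j \<in> {a..<b}" "i < j"
  have "nu j < lam j" "lam (Suc i) < nu i" using nu ij unfolding strictly_interlaces_def by auto
  moreover have "lam j \<le> lam (Suc i)" using strict_antimono_on_leD[OF lam] ij by auto
  ultimately show "nu j < nu i" by linarith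
qed

lemma sign_prod_nodes_in_gap:
  fixes lam :: "nat \<Rightarrow> real"
  assumes lam: "strict_antimono_on {a..b} lam" and j: "j \<in> {a..<b}" and t: "lam (Suc j) < t" "t < lam j"
    and i: "i \<in> {a..j}"
  shows "0 < (-1) ^ (j - a) * (\<Prod>m\<in>{a..b} - {i}. t - lam m)"
proof -
  have "(t < lam m \<longleftrightarrow> m \<le> j) \<and> lam m \<noteq> t" if "m \<in> {a..b}" for m
  proof (cases "m \<le> j")
    case True
    then have "lam j \<le> lam m" using strict_antimono_on_leD[OF lam] that j by auto
    then show ?thesis using t True by auto
  next
    case False
    then have "lam m \<le> lam (Suc j)" using strict_antimono_on_leD[OF lam] that j by auto
    then show ?thesis using t False by auto
  qed
  then have "{m\<in>{a..b} - {i}. t < lam m} = {a..j} - {i}" and "\<forall>m\<in>{a..b} - {i}. lam m \<noteq> t"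
    using j by auto
  moreover have "card ({a..j} - {i}) = j - a" using i by simp
  ultimately show ?thesis using sign_prod_diff[of "{a..b} - {i}" lam t] by simp
qed

lemma sign_prod_roots_in_gap:
  fixes lam :: "nat \<Rightarrow> real"
  assumes lam: "strict_antimono_on {a..b} lam" and nu: "strictly_interlaces a b lam nu"
    and j: "j \<in> {a..<b}" and t: "lam (Suc j) < t" "t < lam j"
  shows "0 < (-1) ^ (j - a) * (\<Prod>m\<in>{a..<b} - {j}. t - nu m)"
proof -
  have "(t < nu m \<longleftrightarrow> m < j) \<and> nu m \<noteq> t" if "m \<in> {a..<b} - {j}" for m
  proof (cases "m < j")
    case True
    then have "lam j \<le> lam (Suc m)" using strict_antimono_on_leD[OF lam] that j by auto
    moreover have "lam (Suc m) < nu m" using nu that unfolding strictly_interlaces_def by auto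
    ultimately show ?thesis using t True by auto
  next
    case False
    then have "lam m \<le> lam (Suc j)" using strict_antimono_on_leD[OF lam] that j by auto
    moreover have "nu m < lam m" using nu that unfolding strictly_interlaces_def by auto
    ultimately show ?thesis using t False by auto
  qed
  then have "{m\<in>{a..<b} - {j}. t < nu m} = {a..<j}" and "\<forall>m\<in>{a..<b} - {j}. nu m \<noteq> t"
    using j by auto
  with sign_prod_diff[of "{a..<b} - {j}" nu t] show ?thesis by simp
qed

lemma sign_interlace_poly_on_node:
  fixes lam :: "nat \<Rightarrow> real"
  assumes lam: "strict_antimono_on {a..b} lam" and i: "i \<in> {a..b}" and w: "0 < w i"
  shows "0 < (-1) ^ (i - a) * poly (interlace_poly_on {a..b} lam w) (lam i)"
proof -
  have "lam i < lam m \<longleftrightarrow> m < i" if "m \<in> {a..b}" "m \<noteq> i" for m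
    using monotone_onD[OF lam, of m i] monotone_onD[OF lam, of i m] that i by (cases "m < i") auto
  then have "{m\<in>{a..b} - {i}. lam i < lam m} = {a..<i}"
    using i by auto
  moreover have "\<And>m. m \<in> {a..b} - {i} \<Longrightarrow> lam m \<noteq> lam i"
    using i strict_antimono_iff_antimono[THEN iffD1, OF lam] by (auto simp: inj_on_def)
  ultimately have "0 < (-1) ^ (i - a) * (\<Prod>m\<in>{a..b} - {i}. lam i - lam m)"
    using sign_prod_diff[of "{a..b} - {i}" lam "lam i"] by simp
  then show ?thesis using w i by (simp add: poly_interlace_poly_on_node mult.left_commute)
qed

lemma interlace_poly_on_factorization:
  fixes lam :: "nat \<Rightarrow> real"
  assumes ab: "a < b" and lam: "strict_antimono_on {a..b} lam" and w: "\<And>i. i \<in> {a..b} \<Longrightarrow> 0 < w i"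
  obtains nu where "strictly_interlaces a b lam nu"
    and "interlace_poly_on {a..b} lam w = smult (\<Sum>i=a..b. w i) (\<Prod>j\<in>{a..<b}. [:- nu j, 1:])"
proof -
  let ?P = "interlace_poly_on {a..b} lam w"
  have "\<exists>t. lam (Suc j) < t \<and> t < lam j \<and> poly ?P t = 0" if j: "j \<in> {a..<b}" for j
  proof -
    have s1: "0 < (-1) ^ (j - a) * poly ?P (lam j)" and s2: "0 < (-1) ^ Suc (j - a) * poly ?P (lam (Suc j))"
      using sign_interlace_poly_on_node[OF lam, of j w] sign_interlace_poly_on_node[OF lam, of "Suc j" w]
        w j Suc_diff_le[of a j] by auto
    have "poly ?P (lam (Suc j)) * poly ?P (lam j)
        = - (((-1) ^ Suc (j - a) * poly ?P (lam (Suc j))) * ((-1) ^ (j - a) * poly ?P (lam j)))"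
      by (simp add: mult_ac flip: power_mult_distrib)
    also have "\<dots> < 0" using mult_pos_pos[OF s2 s1] by linarith
    finally show ?thesis using poly_IVT[of "lam (Suc j)" "lam j" ?P] monotone_onD[OF lam] j by force
  qed
  then obtain nu where nu: "\<And>j. j \<in> {a..<b} \<Longrightarrow> lam (Suc j) < nu j \<and> nu j < lam j \<and> poly ?P (nu j) = 0"
    by metis
  then have interlaces: "strictly_interlaces a b lam nu" unfolding strictly_interlaces_def by auto
  have "inj_on nu {a..<b}"
    using strictly_interlaces_imp_strict_antimono[OF lam interlaces] by (simp add: strict_antimono_iff_antimono)
  moreover have "card {a..b} - 1 = card {a..<b}" using ab by simp
  ultimately have "?P = smult (coeff ?P (card {a..<b})) (\<Prod>j\<in>{a..<b}. [:- nu j, 1:])"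
    using nu degree_coeff_interlace_poly_on(1)[of "{a..b}" lam w]
    by (intro poly_eq_smult_prod_linear) auto
  also have "coeff ?P (card {a..<b}) = (\<Sum>i=a..b. w i)"
    using degree_coeff_interlace_poly_on(2)[of "{a..b}" lam w] ab by simp
  finally show ?thesis using that interlaces by blast
qed

lemma root_le_tail_root:
  fixes lam :: "nat \<Rightarrow> real"
  assumes lam: "strict_antimono_on {a..b} lam" and w: "\<And>i. i \<in> {a..b} \<Longrightarrow> 0 \<le> w i"
    and mu: "strictly_interlaces a b lam mu"
    and P: "interlace_poly_on {a..b} lam w = smult W (\<Prod>j\<in>{a..<b}. [:- mu j, 1:])" and W: "0 < W"
    and nu: "strictly_interlaces d b lam nu"
    and Q: "interlace_poly_on {d..b} lam w = smult V (\<Prod>j\<in>{d..<b}. [:- nu j, 1:])"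
    and d: "a \<le> d" and j: "j \<in> {d..<b}"
  shows "mu j \<le> nu j"
proof (rule ccontr)
  assume "\<not> mu j \<le> nu j"
  define t where "t = nu j"
  have t: "lam (Suc j) < t" "t < lam j" using nu j unfolding strictly_interlaces_def t_def by auto
  have ja: "j \<in> {a..<b}" using j d by auto
  have "(-1) ^ (j - a) * poly (interlace_poly_on {a..b} lam w) t
      = W * (t - mu j) * ((-1) ^ (j - a) * (\<Prod>m\<in>{a..<b} - {j}. t - mu m))"
    unfolding P poly_smult poly_prod using ja by (simp add: prod.remove[of _ j] mult_ac)
  also have "\<dots> < 0"
    using sign_prod_roots_in_gap[OF lam mu ja t] W \<open>\<not> mu j \<le> nu j\<close>
    by (intro mult_neg_pos mult_pos_neg) (auto simp: t_def)
  finally have neg: "(-1) ^ (j - a) * poly (interlace_poly_on {a..b} lam w) t < 0" .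
  have "poly (interlace_poly_on {d..b} lam w) t = 0"
    unfolding Q t_def poly_smult poly_prod using j by (auto simp: prod_zero_iff)
  moreover have "{d..b} \<union> {a..<d} = {a..b}" "{d..b} \<inter> {a..<d} = {}" using d j by auto
  ultimately have split: "poly (interlace_poly_on {a..b} lam w) t
      = (\<Sum>i\<in>{a..<d}. w i * (\<Prod>m\<in>{a..b} - {i}. t - lam m))"
    using poly_interlace_poly_on_union[of "{d..b}" "{a..<d}" lam w t] by auto
  have summand: "0 \<le> (-1) ^ (j - a) * (w i * (\<Prod>m\<in>{a..b} - {i}. t - lam m))"
    if i: "i \<in> {a..<d}" for i
  proof -
    have "i \<in> {a..j}" using i j by auto
    from sign_prod_nodes_in_gap[OF lam ja t this]
    show ?thesis using w[of i] i d j by (simp add: mult.left_commute)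
  qed
  have "0 \<le> (-1) ^ (j - a) * poly (interlace_poly_on {a..b} lam w) t"
    unfolding split sum_distrib_left by (rule sum_nonneg) (rule summand)
  then show False using neg by simp
qed

lemma prod_tail_gaps_bound:
  fixes lam :: "nat \<Rightarrow> real"
  assumes lam: "strict_antimono_on {a..b} lam" and nu: "strictly_interlaces a b lam nu"
    and jk: "a \<le> j" "j \<le> k" "k < b"
  shows "0 < (\<Prod>m\<in>{Suc k..<b}. lam j - nu m)"
    and "(lam j - lam (Suc k)) * (\<Prod>m\<in>{Suc k..<b}. lam j - nu m) \<le> (\<Prod>i\<in>{Suc k..b}. lam j - lam i)"
proof -
  have gap: "0 < lam j - nu m \<and> lam j - nu m \<le> lam j - lam (Suc m)" if "m \<in> {Suc k..<b}" for m
  proof -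
    have "lam (Suc m) < nu m" "nu m < lam m" using nu that jk unfolding strictly_interlaces_def by auto
    moreover have "lam m \<le> lam j" using strict_antimono_on_leD[OF lam] that jk by auto
    ultimately show ?thesis by linarith
  qed
  then show "0 < (\<Prod>m\<in>{Suc k..<b}. lam j - nu m)" by (intro prod_pos) auto
  have "(\<Prod>i\<in>{Suc k..b}. lam j - lam i) = (lam j - lam (Suc k)) * (\<Prod>i\<in>{Suc (Suc k)..<Suc b}. lam j - lam i)"
    using jk by (simp add: prod.atLeast_Suc_atMost atLeastLessThanSuc_atLeastAtMost)
  also have "\<dots> = (lam j - lam (Suc k)) * (\<Prod>m\<in>{Suc k..<b}. lam j - lam (Suc m))"
    by (simp only: prod.atLeast_Suc_lessThan_Suc_shift o_def)
  finally have shift: "(\<Prod>i\<in>{Suc k..b}. lam j - lam i)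
      = (lam j - lam (Suc k)) * (\<Prod>m\<in>{Suc k..<b}. lam j - lam (Suc m))" .
  have "lam (Suc k) \<le> lam j" using strict_antimono_on_leD[OF lam] jk by auto
  then show "(lam j - lam (Suc k)) * (\<Prod>m\<in>{Suc k..<b}. lam j - nu m) \<le> (\<Prod>i\<in>{Suc k..b}. lam j - lam i)"
    unfolding shift by (intro mult_left_mono prod_mono) (use gap in \<open>auto intro: less_imp_le\<close>)
qed

lemma lagrange_term_lower_bound:
  fixes lam :: "nat \<Rightarrow> real"
  assumes lam: "strict_antimono_on {a..b} lam" and w: "0 \<le> w j"
    and nu: "strictly_interlaces a b lam nu"
    and P: "interlace_poly_on {a..b} lam w = smult W (\<Prod>j\<in>{a..<b}. [:- nu j, 1:])" and W: "0 < W"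
    and jk: "a \<le> j" "j \<le> k" "k < b"
  shows "w j / W * (lam j - lam (Suc k))
      \<le> (\<Prod>i\<in>{a..k}. lam j - nu i) / (\<Prod>i\<in>{a..k} - {j}. lam j - lam i)"
proof -
  define G where "G = (\<Prod>i\<in>{a..k}. lam j - nu i)"
  define d where "d = (\<Prod>i\<in>{a..k} - {j}. lam j - lam i)"
  define H where "H = (\<Prod>m\<in>{Suc k..<b}. lam j - nu m)"
  define B where "B = (\<Prod>i\<in>{Suc k..b}. lam j - lam i)"
  have "{a..b} - {j} = ({a..k} - {j}) \<union> {Suc k..b}" "({a..k} - {j}) \<inter> {Suc k..b} = {}"
    and "{a..<b} = {a..k} \<union> {Suc k..<b}" "{a..k} \<inter> {Suc k..<b} = {}"
    using jk by auto
  then have "(\<Prod>i\<in>{a..b} - {j}. lam j - lam i) = d * B" "(\<Prod>m\<in>{a..<b}. lam j - nu m) = G * H"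
    unfolding d_def B_def G_def H_def by (simp_all add: prod.union_disjoint)
  then have eq: "w j * (d * B) = W * (G * H)"
    using poly_interlace_poly_on_node[of "{a..b}" j lam w] jk unfolding P poly_smult poly_prod by simp
  have "d \<noteq> 0"
    using lam jk unfolding d_def by (auto simp: strict_antimono_iff_antimono inj_on_def)
  have H: "0 < H" "(lam j - lam (Suc k)) * H \<le> B"
    using prod_tail_gaps_bound[OF lam nu jk] unfolding H_def B_def by auto
  have "w j / W * (lam j - lam (Suc k)) = w j * ((lam j - lam (Suc k)) * H) / (W * H)"
    using W H by (simp add: field_simps)
  also have "\<dots> \<le> w j * B / (W * H)"
    using W H w by (intro divide_right_mono mult_left_mono) auto
  also have "\<dots> = G / d"
    using eq \<open>d \<noteq> 0\<close> W H by (simp add: field_simps)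
  finally show ?thesis unfolding G_def d_def .
qed

lemma prefix_root_sum_le:
  fixes lam :: "nat \<Rightarrow> real"
  assumes lam: "strict_antimono_on {a..b} lam" and w: "\<And>i. i \<in> {a..b} \<Longrightarrow> 0 \<le> w i"
    and nu: "strictly_interlaces a b lam nu"
    and P: "interlace_poly_on {a..b} lam w = smult W (\<Prod>j\<in>{a..<b}. [:- nu j, 1:])" and W: "0 < W"
    and k: "a \<le> k" "k < b"
  shows "(\<Sum>j=a..k. nu j) \<le> (\<Sum>j=a..k. lam j) - (\<Sum>j=a..k. w j / W * (lam j - lam (Suc k)))"
proof -
  have "(\<Sum>j=a..k. w j / W * (lam j - lam (Suc k)))
      \<le> (\<Sum>j=a..k. (\<Prod>i\<in>{a..k}. lam j - nu i) / (\<Prod>i\<in>{a..k} - {j}. lam j - lam i))"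
    using k by (intro sum_mono lagrange_term_lower_bound[OF lam w nu P W]) auto
  also have "\<dots> = (\<Sum>j=a..k. lam j) - (\<Sum>j=a..k. nu j)"
  proof (rule sum_diff_eq_lagrange_sum[symmetric])
    show "inj_on lam {a..k}"
      using lam k by (auto simp: strict_antimono_iff_antimono intro: inj_on_subset)
  qed (use k in auto)
  finally show ?thesis by simp
qed

lemma root_sum_le_strict:
  fixes lam :: "nat \<Rightarrow> real"
  assumes lam: "strict_antimono_on {a..b} lam" and w: "\<And>i. i \<in> {a..b} \<Longrightarrow> 0 < w i"
    and mu: "strictly_interlaces a b lam mu"
    and P: "interlace_poly_on {a..b} lam w = (\<Prod>j\<in>{a..<b}. [:- mu j, 1:])"
    and lr: "a \<le> l" "l \<le> r" "r < b"
  shows "(\<Sum>j=l..r. mu j) \<le> (\<Sum>j=l..r. lam j) - (\<Sum>j=l..r. w j / (\<Sum>i=l..b. w i) * (lam j - lam (Suc r)))"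
proof -
  have lam': "strict_antimono_on {l..b} lam" using lam lr by (auto intro: monotone_on_subset)
  obtain nu where nu: "strictly_interlaces l b lam nu"
    and Q: "interlace_poly_on {l..b} lam w = smult (\<Sum>i=l..b. w i) (\<Prod>j\<in>{l..<b}. [:- nu j, 1:])"
    using interlace_poly_on_factorization[OF _ lam', of w] w lr by auto
  have "interlace_poly_on {a..b} lam w = smult 1 (\<Prod>j\<in>{a..<b}. [:- mu j, 1:])" using P by simp
  then have "(\<Sum>j=l..r. mu j) \<le> (\<Sum>j=l..r. nu j)"
    by (intro sum_mono root_le_tail_root[OF lam _ mu _ zero_less_one nu Q])
      (use w lr in \<open>auto intro: less_imp_le\<close>)
  also have "\<dots> \<le> (\<Sum>j=l..r. lam j) - (\<Sum>j=l..r. w j / (\<Sum>i=l..b. w i) * (lam j - lam (Suc r)))"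
    by (rule prefix_root_sum_le[OF lam' _ nu Q]) (use w lr in \<open>auto intro: less_imp_le sum_pos\<close>)
  finally show ?thesis .
qed

lemma convergent_subseq_finite_family:
  fixes X :: "nat \<Rightarrow> 'a \<Rightarrow> real"
  assumes "finite J" "\<And>m j. j \<in> J \<Longrightarrow> \<bar>X m j\<bar> \<le> B"
  shows "\<exists>s. strict_mono s \<and> (\<forall>j\<in>J. convergent (\<lambda>m. X (s m) j))"
  using assms
proof (induction J rule: finite_induct)
  case empty
  show ?case by (rule exI[of _ id]) (simp add: strict_mono_def)
next
  case (insert i J)
  then obtain s where s: "strict_mono s" "\<forall>j\<in>J. convergent (\<lambda>m. X (s m) j)" by auto
  obtain t where t: "strict_mono t" "monoseq (\<lambda>m. X (s (t m)) i)"
    using seq_monosub[of "\<lambda>m. X (s m) i"] by blast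
  have "Bseq (\<lambda>m. X (s (t m)) i)" using insert.prems by (intro BseqI'[of _ B]) auto
  then have "convergent (\<lambda>m. X (s (t m)) i)" using t(2) by (rule Bseq_monoseq_convergent)
  moreover have "convergent (\<lambda>m. X (s (t m)) j)" if "j \<in> J" for j
    using convergent_subseq_convergent[OF s(2)[rule_format, OF that] t(1)] by (simp add: o_def)
  ultimately show ?case using strict_mono_o[OF s(1) t(1)] by (auto simp: o_def)
qed

lemma sorted_roots_subseq_tendsto:
  fixes nuS :: "nat \<Rightarrow> nat \<Rightarrow> real" and mu :: "nat \<Rightarrow> real"
  assumes conv: "\<And>x. (\<lambda>m. \<Prod>j\<in>{a..<b}. x - nuS m j) \<longlonglongrightarrow> (\<Prod>j\<in>{a..<b}. x - mu j)"
    and bounded: "\<And>m j. j \<in> {a..<b} \<Longrightarrow> \<bar>nuS m j\<bar> \<le> B"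
    and nuS_mono: "\<And>m. antimono_on {a..<b} (nuS m)" and mu_mono: "antimono_on {a..<b} mu"
  obtains s where "strict_mono s" "\<And>j. j \<in> {a..<b} \<Longrightarrow> (\<lambda>m. nuS (s m) j) \<longlonglongrightarrow> mu j"
proof -
  obtain s where s: "strict_mono s" and cv: "\<forall>j\<in>{a..<b}. convergent (\<lambda>m. nuS (s m) j)"
    using convergent_subseq_finite_family[of "{a..<b}" nuS B] bounded by auto
  define nu where "nu j = lim (\<lambda>m. nuS (s m) j)" for j
  have lim: "(\<lambda>m. nuS (s m) j) \<longlonglongrightarrow> nu j" if "j \<in> {a..<b}" for j
    using cv that unfolding nu_def by (simp add: convergent_LIMSEQ_iff)
  have "antimono_on {a..<b} nu"
  proof (rule monotone_onI)
    fix i j assume ij: "i \<in> {a..<b}" "j \<in> {a..<b}" "i \<le> j"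
    show "nu j \<le> nu i"
      by (rule LIMSEQ_le[OF lim[OF ij(2)] lim[OF ij(1)]]) (use monotone_onD[OF nuS_mono ij] in auto)
  qed
  moreover have "(\<Prod>j\<in>{a..<b}. x - nu j) = (\<Prod>j\<in>{a..<b}. x - mu j)" for x
  proof (rule LIMSEQ_unique)
    show "(\<lambda>m. \<Prod>j\<in>{a..<b}. x - nuS (s m) j) \<longlonglongrightarrow> (\<Prod>j\<in>{a..<b}. x - nu j)"
      by (intro tendsto_intros lim)
    show "(\<lambda>m. \<Prod>j\<in>{a..<b}. x - nuS (s m) j) \<longlonglongrightarrow> (\<Prod>j\<in>{a..<b}. x - mu j)"
      using LIMSEQ_subseq_LIMSEQ[OF conv s] by (simp add: o_def)
  qed
  then have "(\<Prod>j\<in>{a..<b}. [:- nu j, 1:]) = (\<Prod>j\<in>{a..<b}. [:- mu j, 1:])"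
    by (intro poly_ext) (simp add: poly_prod)
  ultimately have "nu j = mu j" if "j \<in> {a..<b}" for j
    using sorted_roots_unique mu_mono that by blast
  then show ?thesis using that s lim by auto
qed

lemma strict_antimono_approx:
  fixes lam :: "nat \<Rightarrow> real"
  assumes lam: "antimono_on {a..b} lam"
  obtains lamS :: "nat \<Rightarrow> nat \<Rightarrow> real"
  where "\<And>m. strict_antimono_on {a..b} (lamS m)" and "\<And>m i. i \<in> {a..b} \<Longrightarrow> \<bar>lamS m i - lam i\<bar> \<le> 1"
    and "\<And>i. (\<lambda>m. lamS m i) \<longlonglongrightarrow> lam i"
proof -
  define e where "e m = inverse (real (Suc m))" for m
  have e: "0 < e m" "e m \<le> 1" for m unfolding e_def by (auto simp: inverse_le_1_iff)
  have e_lim: "e \<longlonglongrightarrow> 0" unfolding e_def by (rule LIMSEQ_inverse_real_of_nat)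
  define lamS where "lamS m i = lam i - real i / real (Suc b) * e m" for m i
  have "strict_antimono_on {a..b} (lamS m)" for m
  proof (rule monotone_onI)
    fix i j assume ij: "i \<in> {a..b}" "j \<in> {a..b}" "i < j"
    have "real i / real (Suc b) * e m < real j / real (Suc b) * e m"
      using ij e[of m] by (intro mult_strict_right_mono divide_strict_right_mono) auto
    then show "lamS m j < lamS m i"
      using monotone_onD[OF lam, of i j] ij unfolding lamS_def by auto
  qed
  moreover have "\<bar>lamS m i - lam i\<bar> \<le> 1" if "i \<in> {a..b}" for m i
  proof -
    have "real i / real (Suc b) * e m \<le> 1" using that e[of m] by (intro mult_le_one) auto
    then show ?thesis using e[of m] unfolding lamS_def by simp
  qed
  moreover have "(\<lambda>m. lamS m i) \<longlonglongrightarrow> lam i" for i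
  proof -
    have "(\<lambda>m. lamS m i) \<longlonglongrightarrow> lam i - real i / real (Suc b) * 0"
      unfolding lamS_def by (intro tendsto_intros e_lim)
    then show ?thesis by simp
  qed
  ultimately show ?thesis by (rule that)
qed

lemma positive_weights_approx:
  fixes w :: "'a \<Rightarrow> real"
  assumes S: "finite S" and w: "\<And>i. i \<in> S \<Longrightarrow> 0 \<le> w i" and w_sum: "(\<Sum>i\<in>S. w i) = 1"
  obtains wS :: "nat \<Rightarrow> 'a \<Rightarrow> real"
  where "\<And>m i. i \<in> S \<Longrightarrow> 0 < wS m i" and "\<And>m. (\<Sum>i\<in>S. wS m i) = 1"
    and "\<And>i. (\<lambda>m. wS m i) \<longlonglongrightarrow> w i"
proof -
  define e where "e m = inverse (real (Suc m))" for m
  have e: "0 < e m" for m unfolding e_def by simp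
  have e_lim: "e \<longlonglongrightarrow> 0" unfolding e_def by (rule LIMSEQ_inverse_real_of_nat)
  define wS where "wS m i = (w i + e m) / (1 + real (card S) * e m)" for m i
  have "0 < wS m i" if "i \<in> S" for m i
    using w[OF that] e[of m] unfolding wS_def by (simp add: add_pos_nonneg)
  moreover have "(\<Sum>i\<in>S. wS m i) = 1" for m
  proof -
    have "(\<Sum>i\<in>S. w i + e m) = 1 + real (card S) * e m" by (simp add: sum.distrib w_sum)
    moreover have "0 < 1 + real (card S) * e m" using e[of m] by (simp add: add_pos_nonneg)
    ultimately show ?thesis unfolding wS_def by (simp add: sum_divide_distrib[symmetric])
  qed
  moreover have "(\<lambda>m. wS m i) \<longlonglongrightarrow> w i" for i
  proof -
    have "(\<lambda>m. wS m i) \<longlonglongrightarrow> (w i + 0) / (1 + real (card S) * 0)"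
      unfolding wS_def by (intro tendsto_intros e_lim) simp
    then show ?thesis by simp
  qed
  ultimately show ?thesis by (rule that)
qed

lemma strictly_interlaces_abs_le:
  fixes lam nu :: "nat \<Rightarrow> real"
  assumes "strictly_interlaces a b lam nu" "\<And>i. i \<in> {a..b} \<Longrightarrow> \<bar>lam i\<bar> \<le> B" "j \<in> {a..<b}"
  shows "\<bar>nu j\<bar> \<le> B"
proof -
  have "lam (Suc j) < nu j" "nu j < lam j" using assms(1,3) unfolding strictly_interlaces_def by auto
  moreover have "\<bar>lam j\<bar> \<le> B" "\<bar>lam (Suc j)\<bar> \<le> B" using assms(2,3) by auto
  ultimately show ?thesis by (auto simp: abs_le_iff)
qed

lemma interlacing_roots_subseq_tendsto:
  fixes lam w mu :: "nat \<Rightarrow> real" and lamS wS muS :: "nat \<Rightarrow> nat \<Rightarrow> real"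
  assumes lamS: "\<And>m. strict_antimono_on {a..b} (lamS m)"
    and muS: "\<And>m. strictly_interlaces a b (lamS m) (muS m)"
    and PS: "\<And>m. interlace_poly_on {a..b} (lamS m) (wS m) = (\<Prod>j\<in>{a..<b}. [:- muS m j, 1:])"
    and close: "\<And>m i. i \<in> {a..b} \<Longrightarrow> \<bar>lamS m i - lam i\<bar> \<le> 1"
    and lamS_lim: "\<And>i. (\<lambda>m. lamS m i) \<longlonglongrightarrow> lam i" and wS_lim: "\<And>i. (\<lambda>m. wS m i) \<longlonglongrightarrow> w i"
    and mu: "antimono_on {a..<b} mu" and P: "interlace_poly_on {a..b} lam w = (\<Prod>j\<in>{a..<b}. [:- mu j, 1:])"
  obtains s where "strict_mono s" "\<And>j. j \<in> {a..<b} \<Longrightarrow> (\<lambda>m. muS (s m) j) \<longlonglongrightarrow> mu j"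
proof (rule sorted_roots_subseq_tendsto[where nuS = muS and B = "(\<Sum>i=a..b. \<bar>lam i\<bar>) + 1"])
  show "(\<lambda>m. \<Prod>j\<in>{a..<b}. x - muS m j) \<longlonglongrightarrow> (\<Prod>j\<in>{a..<b}. x - mu j)" for x
  proof -
    have "(\<lambda>m. poly (interlace_poly_on {a..b} (lamS m) (wS m)) x) \<longlonglongrightarrow> poly (interlace_poly_on {a..b} lam w) x"
      unfolding poly_interlace_poly_on by (intro tendsto_intros lamS_lim wS_lim)
    then show ?thesis unfolding PS P poly_prod by simp
  qed
  show "\<bar>muS m j\<bar> \<le> (\<Sum>i=a..b. \<bar>lam i\<bar>) + 1" if "j \<in> {a..<b}" for m j
  proof (rule strictly_interlaces_abs_le[OF muS _ that])
    show "\<bar>lamS m i\<bar> \<le> (\<Sum>i=a..b. \<bar>lam i\<bar>) + 1" if "i \<in> {a..b}" for i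
      using close[OF that, of m] member_le_sum[of i "{a..b}" "\<lambda>i. \<bar>lam i\<bar>"] that
      by (simp add: abs_le_iff abs_diff_le_iff)
  qed
  show "antimono_on {a..<b} (muS m)" for m
    using strictly_interlaces_imp_strict_antimono[OF lamS muS] by (simp add: strict_antimono_iff_antimono)
qed (use mu that in auto)

lemma generic_approximation:
  fixes lam w mu :: "nat \<Rightarrow> real"
  assumes lam: "antimono_on {a..b} lam" and w: "\<And>i. i \<in> {a..b} \<Longrightarrow> 0 \<le> w i"
    and w_sum: "(\<Sum>i=a..b. w i) = 1"
    and mu: "antimono_on {a..<b} mu" and P: "interlace_poly_on {a..b} lam w = (\<Prod>j\<in>{a..<b}. [:- mu j, 1:])"
    and ab: "a < b"
  obtains lamS wS muS :: "nat \<Rightarrow> nat \<Rightarrow> real"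
  where "\<And>m. strict_antimono_on {a..b} (lamS m)" and "\<And>m i. i \<in> {a..b} \<Longrightarrow> 0 < wS m i"
    and "\<And>m. strictly_interlaces a b (lamS m) (muS m)"
    and "\<And>m. interlace_poly_on {a..b} (lamS m) (wS m) = (\<Prod>j\<in>{a..<b}. [:- muS m j, 1:])"
    and "\<And>i. (\<lambda>m. lamS m i) \<longlonglongrightarrow> lam i" and "\<And>i. (\<lambda>m. wS m i) \<longlonglongrightarrow> w i"
    and "\<And>j. j \<in> {a..<b} \<Longrightarrow> (\<lambda>m. muS m j) \<longlonglongrightarrow> mu j"
proof -
  obtain lamS where lamS: "\<And>m. strict_antimono_on {a..b} (lamS m)"
    and close: "\<And>m i. i \<in> {a..b} \<Longrightarrow> \<bar>lamS m i - lam i\<bar> \<le> 1"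
    and lamS_lim: "\<And>i. (\<lambda>m. lamS m i) \<longlonglongrightarrow> lam i"
    using strict_antimono_approx[OF lam] by blast
  obtain wS where wS: "\<And>m i. i \<in> {a..b} \<Longrightarrow> 0 < wS m i" "\<And>m. (\<Sum>i=a..b. wS m i) = 1"
    and wS_lim: "\<And>i. (\<lambda>m. wS m i) \<longlonglongrightarrow> w i"
    using positive_weights_approx[of "{a..b}" w] w w_sum by blast
  have "\<exists>nu. strictly_interlaces a b (lamS m) nu
      \<and> interlace_poly_on {a..b} (lamS m) (wS m) = (\<Prod>j\<in>{a..<b}. [:- nu j, 1:])" for m
    using interlace_poly_on_factorization[OF ab lamS[of m], of "wS m"] wS by (metis smult_1_left)
  then obtain muS where muS: "\<And>m. strictly_interlaces a b (lamS m) (muS m)"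
    and PS: "\<And>m. interlace_poly_on {a..b} (lamS m) (wS m) = (\<Prod>j\<in>{a..<b}. [:- muS m j, 1:])"
    by metis
  obtain s where s: "strict_mono s" and mu_lim: "\<And>j. j \<in> {a..<b} \<Longrightarrow> (\<lambda>m. muS (s m) j) \<longlonglongrightarrow> mu j"
    using interlacing_roots_subseq_tendsto[OF lamS muS PS close lamS_lim wS_lim mu P] by blast
  have sub: "(\<lambda>m. f (s m)) \<longlonglongrightarrow> L" if "f \<longlonglongrightarrow> L" for f :: "nat \<Rightarrow> real" and L
    using LIMSEQ_subseq_LIMSEQ[OF that s] by (simp add: o_def)
  show ?thesis
    by (rule that[of "\<lambda>m. lamS (s m)" "\<lambda>m. wS (s m)" "\<lambda>m. muS (s m)"])
      (use lamS wS muS PS mu_lim in \<open>auto intro: sub lamS_lim wS_lim\<close>)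
qed

lemma root_sum_le:
  fixes lam w mu :: "nat \<Rightarrow> real"
  assumes lam: "antimono_on {a..b} lam" and w: "\<And>i. i \<in> {a..b} \<Longrightarrow> 0 \<le> w i"
    and w_sum: "(\<Sum>i=a..b. w i) = 1"
    and mu: "antimono_on {a..<b} mu" and P: "interlace_poly_on {a..b} lam w = (\<Prod>j\<in>{a..<b}. [:- mu j, 1:])"
    and lr: "a \<le> l" "l \<le> r" "r < b" and U: "(\<Sum>i=l..b. w i) \<noteq> 0"
  shows "(\<Sum>j=l..r. mu j) \<le> (\<Sum>j=l..r. lam j) - (\<Sum>j=l..r. w j / (\<Sum>i=l..b. w i) * (lam j - lam (Suc r)))"
proof -
  have "a < b" using lr by simp
  obtain lamS wS muS where lamS: "\<And>m. strict_antimono_on {a..b} (lamS m)"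
    and wS: "\<And>m i. i \<in> {a..b} \<Longrightarrow> 0 < wS m i"
    and muS: "\<And>m. strictly_interlaces a b (lamS m) (muS m)"
    and PS: "\<And>m. interlace_poly_on {a..b} (lamS m) (wS m) = (\<Prod>j\<in>{a..<b}. [:- muS m j, 1:])"
    and lamS_lim: "\<And>i. (\<lambda>m. lamS m i) \<longlonglongrightarrow> lam i" and wS_lim: "\<And>i. (\<lambda>m. wS m i) \<longlonglongrightarrow> w i"
    and mu_lim: "\<And>j. j \<in> {a..<b} \<Longrightarrow> (\<lambda>m. muS m j) \<longlonglongrightarrow> mu j"
    using generic_approximation[OF lam w w_sum mu P \<open>a < b\<close>] by blast
  show ?thesis
  proof (rule LIMSEQ_le)
    show "(\<lambda>m. \<Sum>j=l..r. muS m j) \<longlonglongrightarrow> (\<Sum>j=l..r. mu j)"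
      using lr by (intro tendsto_intros mu_lim) auto
    show "(\<lambda>m. (\<Sum>j=l..r. lamS m j) - (\<Sum>j=l..r. wS m j / (\<Sum>i=l..b. wS m i) * (lamS m j - lamS m (Suc r))))
        \<longlonglongrightarrow> (\<Sum>j=l..r. lam j) - (\<Sum>j=l..r. w j / (\<Sum>i=l..b. w i) * (lam j - lam (Suc r)))"
      by (intro tendsto_intros lamS_lim wS_lim U)
    show "\<exists>N. \<forall>m\<ge>N. (\<Sum>j=l..r. muS m j)
        \<le> (\<Sum>j=l..r. lamS m j) - (\<Sum>j=l..r. wS m j / (\<Sum>i=l..b. wS m i) * (lamS m j - lamS m (Suc r)))"
      by (intro exI allI impI root_sum_le_strict[OF lamS wS muS PS lr])
  qed
qed

lemma interlace_poly_on_reindex: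
  assumes h: "bij_betw h S T"
  shows "interlace_poly_on S (lam \<circ> h) (w \<circ> h) = interlace_poly_on T lam w"
proof -
  have "(\<Prod>j\<in>S - {i}. [:- lam (h j), 1:]) = (\<Prod>j\<in>T - {h i}. [:- lam j, 1:])" if "i \<in> S" for i
  proof (rule prod.reindex_bij_betw)
    show "bij_betw h (S - {i}) (T - {h i})"
      using h that by (intro bij_betw_DiffI) (auto simp: bij_betw_def)
  qed
  then show ?thesis
    unfolding interlace_poly_on_def using sum.reindex_bij_betw[OF h] by (simp cong: sum.cong)
qed

lemma poly_interlace_poly_on_uminus:
  assumes "finite S"
  shows "poly (interlace_poly_on S (\<lambda>i. - lam i) w) x
       = (-1) ^ (card S - 1) * poly (interlace_poly_on S lam w) (- x)"
proof -
  have "(\<Prod>j\<in>S - {i}. x - - lam j) = (-1) ^ (card S - 1) * (\<Prod>j\<in>S - {i}. - x - lam j)" if "i \<in> S" for i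
  proof -
    have "(\<Prod>j\<in>S - {i}. x - - lam j) = (\<Prod>j\<in>S - {i}. (-1) * (- x - lam j))"
      by (simp add: algebra_simps)
    also have "\<dots> = (-1) ^ (card S - 1) * (\<Prod>j\<in>S - {i}. - x - lam j)"
      using assms that by (simp only: prod.distrib prod_constant card_Diff_singleton)
    finally show ?thesis .
  qed
  then show ?thesis
    unfolding poly_interlace_poly_on by (simp add: sum_distrib_left mult.left_commute cong: sum.cong)
qed

lemma sum_reflect:
  fixes f :: "nat \<Rightarrow> 'a::comm_monoid_add"
  assumes "a \<le> b" "b \<le> c"
  shows "(\<Sum>j=c-b..c-a. f (c - j)) = (\<Sum>k=a..b. f k)"
  using assms by (intro sum.reindex_bij_witness[where i = "\<lambda>k. c - k" and j = "\<lambda>j. c - j"]) auto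

lemma interlace_poly_on_reflect:
  fixes lam w mu :: "nat \<Rightarrow> real"
  assumes P: "interlace_poly_on {1..n} lam w = (\<Prod>j\<in>{1..<n}. [:- mu j, 1:])"
  shows "interlace_poly_on {1..n} (\<lambda>i. - lam (Suc n - i)) (\<lambda>i. w (Suc n - i))
       = (\<Prod>j\<in>{1..<n}. [:- (- mu (n - j)), 1:])"
proof (rule poly_ext)
  fix x
  have "bij_betw (\<lambda>i. Suc n - i) {1..n} {1..n}"
    by (rule bij_betw_byWitness[where f' = "\<lambda>i. Suc n - i"]) auto
  from interlace_poly_on_reindex[OF this, of "\<lambda>i. - lam i" w]
  have "poly (interlace_poly_on {1..n} (\<lambda>i. - lam (Suc n - i)) (\<lambda>i. w (Suc n - i))) x
      = (-1) ^ (n - 1) * poly (interlace_poly_on {1..n} lam w) (- x)"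
    by (simp add: o_def poly_interlace_poly_on_uminus)
  also have "\<dots> = (-1) ^ (n - 1) * (\<Prod>j\<in>{1..<n}. poly [:- mu j, 1:] (- x))"
    unfolding P poly_prod ..
  also have "\<dots> = (\<Prod>j\<in>{1..<n}. (-1) * poly [:- mu j, 1:] (- x))"
    by (simp only: prod.distrib prod_constant card_atLeastLessThan)
  also have "\<dots> = (\<Prod>j\<in>{1..<n}. x + mu (n - j))"
    by (rule prod.reindex_bij_witness[where i = "\<lambda>j. n - j" and j = "\<lambda>j. n - j"]) auto
  finally show "poly (interlace_poly_on {1..n} (\<lambda>i. - lam (Suc n - i)) (\<lambda>i. w (Suc n - i))) x
      = poly (\<Prod>j\<in>{1..<n}. [:- (- mu (n - j)), 1:]) x"
    by (simp add: poly_prod add.commute)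
qed

lemma root_sum_ge:
  fixes lam w mu :: "nat \<Rightarrow> real"
  assumes lam: "antimono_on {1..n} lam" and w: "\<And>i. i \<in> {1..n} \<Longrightarrow> 0 \<le> w i"
    and w_sum: "(\<Sum>i=1..n. w i) = 1"
    and mu: "antimono_on {1..<n} mu" and P: "interlace_poly_on {1..n} lam w = (\<Prod>j\<in>{1..<n}. [:- mu j, 1:])"
    and lr: "1 \<le> l" "l \<le> r" "r < n" and L: "(\<Sum>i=1..Suc r. w i) \<noteq> 0"
  shows "(\<Sum>j=l..r. lam (Suc j)) + (\<Sum>j=l..r. w (Suc j) / (\<Sum>i=1..Suc r. w i) * (lam l - lam (Suc j)))
           \<le> (\<Sum>j=l..r. mu j)"
proof -
  have reflected: "(\<Sum>j=n-r..n-l. - mu (n - j))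
      \<le> (\<Sum>j=n-r..n-l. - lam (Suc n - j))
        - (\<Sum>j=n-r..n-l. w (Suc n - j) / (\<Sum>i=n-r..n. w (Suc n - i))
            * (- lam (Suc n - j) - - lam (Suc n - Suc (n - l))))"
  proof (rule root_sum_le[where lam = "\<lambda>i. - lam (Suc n - i)" and w = "\<lambda>i. w (Suc n - i)"])
    show "antimono_on {1..n} (\<lambda>i. - lam (Suc n - i))"
      by (rule monotone_onI) (use monotone_onD[OF lam] in auto)
    show "antimono_on {1..<n} (\<lambda>j. - mu (n - j))"
      by (rule monotone_onI) (use monotone_onD[OF mu] in auto)
    show "(\<Sum>i=1..n. w (Suc n - i)) = 1"
      using sum_reflect[of 1 n "Suc n" w] w_sum lr by simp
    show "(\<Sum>i=n-r..n. w (Suc n - i)) \<noteq> 0"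
      using sum_reflect[of 1 "Suc r" "Suc n" w] L lr by simp
    show "0 \<le> w (Suc n - i)" if "i \<in> {1..n}" for i
      using that by (intro w) auto
  qed (use interlace_poly_on_reflect[OF P] lr in auto)
  have mu_sum: "(\<Sum>j=n-r..n-l. - mu (n - j)) = - (\<Sum>j=l..r. mu j)"
    using sum_reflect[of l r n "\<lambda>k. - mu k"] lr by (simp add: sum_negf)
  have lam_sum: "(\<Sum>j=n-r..n-l. - lam (Suc n - j)) = - (\<Sum>j=l..r. lam (Suc j))"
    using sum_reflect[of "Suc l" "Suc r" "Suc n" "\<lambda>k. - lam k"] lr
    by (simp add: sum_negf sum.shift_bounds_cl_Suc_ivl del: sum.cl_ivl_Suc)
  have weight_sum: "(\<Sum>i=n-r..n. w (Suc n - i)) = (\<Sum>i=1..Suc r. w i)"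
    using sum_reflect[of 1 "Suc r" "Suc n" w] lr by simp
  have weighted_sum: "(\<Sum>j=n-r..n-l. w (Suc n - j) / (\<Sum>i=1..Suc r. w i)
        * (- lam (Suc n - j) - - lam (Suc n - Suc (n - l))))
      = (\<Sum>j=l..r. w (Suc j) / (\<Sum>i=1..Suc r. w i) * (lam l - lam (Suc j)))"
    using sum_reflect[of "Suc l" "Suc r" "Suc n" "\<lambda>k. w k / (\<Sum>i=1..Suc r. w i) * (lam l - lam k)"] lr
    by (simp add: sum.shift_bounds_cl_Suc_ivl Suc_diff_le del: sum.cl_ivl_Suc)
  show ?thesis
    using reflected unfolding mu_sum lam_sum weight_sum weighted_sum by linarith
qed

theorem theorem2p2:
  fixes n :: nat and lam w mu :: "nat \<Rightarrow> real"
  assumes "n \<ge> 2"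
    and lam_mono: "\<And>i j. 1 \<le> i \<Longrightarrow> i \<le> j \<Longrightarrow> j \<le> n \<Longrightarrow> lam j \<le> lam i"
    and w_nonneg: "\<And>i. 1 \<le> i \<Longrightarrow> i \<le> n \<Longrightarrow> w i \<ge> 0"
    and w_sum: "(\<Sum>i=1..n. w i) = 1"
    and mu_mono: "\<And>i j. 1 \<le> i \<Longrightarrow> i \<le> j \<Longrightarrow> j \<le> n - 1 \<Longrightarrow> mu j \<le> mu i"
    and mu_roots: "interlace_poly n lam w = (\<Prod>j=1..n-1. [:- mu j, 1:])"
    and "1 \<le> l" and "l \<le> r" and "r \<le> n - 1"
    and U_ne: "(\<Sum>i=l..n. w i) \<noteq> 0"
    and L_ne: "(\<Sum>i=1..r+1. w i) \<noteq> 0"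
  shows "(\<Sum>j=l..r. lam (j+1)) + (\<Sum>j=l..r. w (j+1) / (\<Sum>i=1..r+1. w i) * (lam l - lam (j+1)))
           \<le> (\<Sum>j=l..r. mu j) \<and>
         (\<Sum>j=l..r. mu j)
           \<le> (\<Sum>j=l..r. lam j) - (\<Sum>j=l..r. w j / (\<Sum>i=l..n. w i) * (lam j - lam (r+1)))"
proof -
  have lr: "1 \<le> l" "l \<le> r" "r < n" using assms(1,7-9) by auto
  have lam: "antimono_on {1..n} lam" by (rule monotone_onI) (use lam_mono in auto)
  have mu: "antimono_on {1..<n} mu" by (rule monotone_onI) (use mu_mono in auto)
  have "{1..n-1} = {1..<n}" using assms(1) by auto
  then have P: "interlace_poly_on {1..n} lam w = (\<Prod>j\<in>{1..<n}. [:- mu j, 1:])"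
    using mu_roots by (simp add: interlace_poly_eq_interlace_poly_on)
  show ?thesis
    using root_sum_ge[OF lam _ w_sum mu P lr] root_sum_le[OF lam _ w_sum mu P lr] w_nonneg U_ne L_ne by simp
qed

end
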